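(* Consider the distributed associative memory setting described in the context, with agents running the DAM-TOGD update, and suppose that for each agent $n$ the learning rate sequence $(\eta_{n,t})_{t\ge 1}$ is positive and non-increasing in $t$. Then the regret satisfies $$\mathrm{Reg}(T) \le \sum_{n \in \mathcal{N}} \left( Q_n \sum_{t=\tau_{n,\min}+1}^{T+\tau_{n,\max}} \eta_{n,t} + P_n\, \eta_{n,\tau_{n,\min}+1} + H_n + C_n \right),$$ where $$Q_n = \frac{K_n}{2}\sum_{m\in\mathcal{W}_n} L_m + |\mathcal{W}_n|\, K_n^2 \sum_{m\in\mathcal{W}_n}\tau_{n,m},\qquad P_n = |\mathcal{W}_n|^2 K_n^2\, \tau_{n,\max}^2,$$ $$H_n = \sum_{t=\tau_{n,\min}+1}^{T+\tau_{n,\max}} \frac{\|\mathbf{X}_{n,t}-\mathbf{U}_n^*\|^2 - \|\mathbf{X}_{n,t+1}-\mathbf{U}_n^*\|^2}{2\eta_{n,t}},\qquad C_n = \frac{\Delta\tau_n}{2}\left( K_n\sum_{m\in\mathcal{W}_n} L_m + |\mathcal{W}_n|\, B^2\right),$$ with $K_n = \max_{m\in\mathcal{W}_n} w_{n,m}L_m$, $\tau_{n,\min}=\min_{m\in\mathcal{W}_n}\tau_{n,m}$, $\tau_{n,\max}=\max_{m\in\mathcal{W}_n}\tau_{n,m}$, $\Delta\tau_n=\tau_{n,\max}-\tau_{n,\min}$, and $|\mathcal{W}_n|$ the cardinality of $\mathcal{W}_n$.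
   Context: There are $N$ agents indexed by $\mathcal{N}=\{1,\dots,N\}$. At each time $t=1,2,\dots$, agent $m$ has a convex loss function $f_{m,t}:\mathcal{X}\to\mathbb{R}$ (e.g. built from a key–value pair $(\mathbf{k}_{m,t},\mathbf{v}_{m,t})$), which only agent $m$ can evaluate. The feasible set $\mathcal{X}$ (a set of matrices) is closed, convex and bounded with diameter $B$, and $\|\nabla f_{m,t}(\mathbf{X})\|_F\le L_m$ for all $m$, $t$ and $\mathbf{X}\in\mathcal{X}$, with finite $L_m>0$. Norms $\|\cdot\|$ are Frobenius norms and $\Pi_{\mathcal{X}}$ denotes Euclidean (Frobenius) projection onto $\mathcal{X}$. A row-stochastic matrix $\mathbf{W}$ with entries $w_{n,m}\in[0,1]$, $\sum_m w_{n,m}=1$, is given; $\mathcal{W}_n=\{m\in\mathcal{N}: w_{n,m}>0\}$. Agent $n$ maintains iterates $\mathbf{X}_{n,t}\in\mathcal{X}$ and its cumulative loss is $\mathcal{L}_n^T(\mathbf{X}_n^T)=\sum_{t=1}^T\sum_{m\in\mathcal{W}_n} w_{n,m} f_{m,t}(\mathbf{X}_{n,t})$. Let $\mathbf{U}_n^*\in\arg\min_{\mathbf{U}\in\mathcal{X}}\sum_{t=1}^T\sum_{m\in\mathcal{W}_n} w_{n,m}f_{m,t}(\mathbf{U})$, and define the regret $\mathrm{Reg}(T)=\sum_{n\in\mathcal{N}}\big(\mathcal{L}_n^T(\mathbf{X}_n^T)-\mathcal{L}_n^T(\mathbf{U}_n^* )\big)$ (with $\mathcal{L}_n^T(\mathbf{U}_n^*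 )$ meaning the constant sequence $\mathbf{U}_n^*$). Agents communicate over a connected undirected graph $\mathcal{G}=(\mathcal{N},\mathcal{E})$. For each $n$, a Steiner tree $\mathcal{T}_n$ in $\mathcal{G}$ rooted at $n$ and containing paths from $n$ to every agent of $\mathcal{W}_n$ is fixed; $\tilde\tau_{n,m}$ is the number of edges on the path in $\mathcal{T}_n$ from $n$ to $m$ (so $\tilde\tau_{n,n}=0$), and $\tau_{n,m}=2\tilde\tau_{n,m}$ is the round-trip delay: each message takes one time step per edge, so agent $n$ obtains $\nabla f_{m,s}(\mathbf{X}_{n,s})$ at time $s+\tau_{n,m}$. DAM-TOGD: starting from an initial point $\mathbf{X}_{n,1}\in\mathcal{X}$, each agent $n$ updates, for $t\ge1$, $$\mathbf{X}_{n,t+1}=\Pi_{\mathcal{X}}\Big[\mathbf{X}_{n,t}-\eta_{n,t}\sum_{m\in\mathcal{W}_n} w_{n,m}\nabla f_{m,t-\tau_{n,m}}(\mathbf{X}_{n,t-\tau_{n,m}})\,\mathbb{1}_{\{t>\tau_{n,m}\}}\Big],$$ where $\eta_{n,t}>0$ is the learning rate (iterates are defined by this recursion also for $t>T$). *)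

theory Defs
  imports "HOL-Analysis.Analysis"
begin

text \<open>Matrices are elements of real^'c^'r; the HOL-Analysis norm on this type is the
Frobenius norm and inner is the Frobenius inner product.\<close>

fun is_path :: "('a \<Rightarrow> 'a \<Rightarrow> bool) \<Rightarrow> 'a list \<Rightarrow> bool" where
  "is_path E [] = False"
| "is_path E [x] = True"
| "is_path E (x # y # xs) = (E x y \<and> is_path E (y # xs))"

definition Wset :: "('ag \<Rightarrow> 'ag \<Rightarrow> real) \<Rightarrow> 'ag \<Rightarrow> 'ag set" where
  "Wset w n = {m. w n m > 0}"

definition dam_dir ::
  "('ag \<Rightarrow> 'ag \<Rightarrow> real) \<Rightarrow> ('ag \<Rightarrow> 'ag \<Rightarrow> nat) \<Rightarrow> ('ag \<Rightarrow> nat \<Rightarrow> 'x \<Rightarrow> 'x::real_vector)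
    \<Rightarrow> ('ag \<Rightarrow> nat \<Rightarrow> 'x) \<Rightarrow> 'ag \<Rightarrow> nat \<Rightarrow> 'x" where
  "dam_dir w \<tau> grad X n t =
     (\<Sum>m\<in>Wset w n. w n m *\<^sub>R (if t > \<tau> n m then grad m (t - \<tau> n m) (X n (t - \<tau> n m)) else 0))"

definition regret ::
  "('ag::finite \<Rightarrow> 'ag \<Rightarrow> real) \<Rightarrow> ('ag \<Rightarrow> nat \<Rightarrow> 'x \<Rightarrow> real) \<Rightarrow> ('ag \<Rightarrow> nat \<Rightarrow> 'x)
    \<Rightarrow> ('ag \<Rightarrow> 'x) \<Rightarrow> nat \<Rightarrow> real" where
  "regret w f X U T = (\<Sum>n\<in>UNIV.
      (\<Sum>t=1..T. \<Sum>m\<in>Wset w n. w n m * f m t (X n t))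
    - (\<Sum>t=1..T. \<Sum>m\<in>Wset w n. w n m * f m t (U n)))"

definition Kc :: "('ag \<Rightarrow> 'ag \<Rightarrow> real) \<Rightarrow> ('ag \<Rightarrow> real) \<Rightarrow> 'ag \<Rightarrow> real" where
  "Kc w L n = Max ((\<lambda>m. w n m * L m) ` Wset w n)"

definition tmin :: "('ag \<Rightarrow> 'ag \<Rightarrow> real) \<Rightarrow> ('ag \<Rightarrow> 'ag \<Rightarrow> nat) \<Rightarrow> 'ag \<Rightarrow> nat" where
  "tmin w \<tau> n = Min (\<tau> n ` Wset w n)"

definition tmax :: "('ag \<Rightarrow> 'ag \<Rightarrow> real) \<Rightarrow> ('ag \<Rightarrow> 'ag \<Rightarrow> nat) \<Rightarrow> 'ag \<Rightarrow> nat" where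
  "tmax w \<tau> n = Max (\<tau> n ` Wset w n)"

definition Qc :: "('ag \<Rightarrow> 'ag \<Rightarrow> real) \<Rightarrow> ('ag \<Rightarrow> real) \<Rightarrow> ('ag \<Rightarrow> 'ag \<Rightarrow> nat) \<Rightarrow> 'ag \<Rightarrow> real" where
  "Qc w L \<tau> n = Kc w L n / 2 * (\<Sum>m\<in>Wset w n. L m)
     + real (card (Wset w n)) * (Kc w L n)\<^sup>2 * (\<Sum>m\<in>Wset w n. real (\<tau> n m))"

definition Pc :: "('ag \<Rightarrow> 'ag \<Rightarrow> real) \<Rightarrow> ('ag \<Rightarrow> real) \<Rightarrow> ('ag \<Rightarrow> 'ag \<Rightarrow> nat) \<Rightarrow> 'ag \<Rightarrow> real" where
  "Pc w L \<tau> n = real (card (Wset w n))^2 * (Kc w L n)\<^sup>2 * real (tmax w \<tau> n)^2"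

definition Hc :: "('ag \<Rightarrow> 'ag \<Rightarrow> real) \<Rightarrow> ('ag \<Rightarrow> 'ag \<Rightarrow> nat) \<Rightarrow> ('ag \<Rightarrow> nat \<Rightarrow> real)
    \<Rightarrow> ('ag \<Rightarrow> nat \<Rightarrow> 'x::real_normed_vector) \<Rightarrow> ('ag \<Rightarrow> 'x) \<Rightarrow> nat \<Rightarrow> 'ag \<Rightarrow> real" where
  "Hc w \<tau> \<eta> X U T n = (\<Sum>t = tmin w \<tau> n + 1 .. T + tmax w \<tau> n.
      ((norm (X n t - U n))\<^sup>2 - (norm (X n (t + 1) - U n))\<^sup>2) / (2 * \<eta> n t))"

definition Cc :: "('ag \<Rightarrow> 'ag \<Rightarrow> real) \<Rightarrow> ('ag \<Rightarrow> real) \<Rightarrow> ('ag \<Rightarrow> 'ag \<Rightarrow> nat) \<Rightarrow> real \<Rightarrow> 'ag \<Rightarrow> real" where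
  "Cc w L \<tau> B n = (real (tmax w \<tau> n) - real (tmin w \<tau> n)) / 2 *
      (Kc w L n * (\<Sum>m\<in>Wset w n. L m) + real (card (Wset w n)) * B\<^sup>2)"

end

theory Submission
  imports Defs
begin

text \<open>By convexity the regret is at most the
linearised regret, the sum over t and m of w(n,m) \<nabla>f(m,t)(X(n,t)) \<bullet> (X(n,t) - U). Split
X(n,t) - U into X(n,t+\<tau>) - U plus the drift X(n,t) - X(n,t+\<tau>). Reindexed by the arrival time
s = t + \<tau>, the first parts add up to exactly the direction of the update at time s, so the
one-step inequality of projected gradient descent bounds them; gradients arriving after T cost
only a boundary term of order \<Delta>\<tau> L B. While a gradient is in transit the iterate moves by at
most \<eta>(s) |W| K per step, so the drift contributes |W| K^2 \<tau>(n,m) times the sum of step sizes.\<close>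

lemma convex_on_gradient_inequality:
  fixes f :: "'a::real_inner \<Rightarrow> real"
  assumes convex: "convex_on S f" and x: "x \<in> S" and y: "y \<in> S"
    and deriv: "(f has_derivative (\<lambda>h. g \<bullet> h)) (at x)"
  shows "f x - f y \<le> g \<bullet> (x - y)"
proof -
  define \<phi> where "\<phi> = (\<lambda>s. f (x + s *\<^sub>R (y - x)))"
  have segment: "((\<lambda>s. x + s *\<^sub>R (y - x)) has_derivative (\<lambda>s. s *\<^sub>R (y - x))) (at 0 within {0<..})"
    by (auto intro!: derivative_eq_intros)
  have "(f has_derivative (\<lambda>h. g \<bullet> h)) (at (x + 0 *\<^sub>R (y - x)))"
    using deriv by simp
  from has_derivative_compose[OF segment this]
  have "(\<phi> has_field_derivative g \<bullet> (y - x)) (at 0 within {0<..})"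
    by (simp add: \<phi>_def has_field_derivative_def mult_commute_abs)
  then have slope: "((\<lambda>s. (\<phi> s - \<phi> 0) / (s - 0)) \<longlongrightarrow> g \<bullet> (y - x)) (at_right 0)"
    by (simp add: has_field_derivative_iff)
  have "\<forall>\<^sub>F s in at_right 0. (\<phi> s - \<phi> 0) / (s - 0) \<le> f y - f x"
    using eventually_at_right_real[OF zero_less_one]
  proof eventually_elim
    case (elim s)
    have "\<phi> s - \<phi> 0 \<le> s * (f y - f x)"
      using convex_onD[OF convex, of s x y] elim x y
      by (simp add: \<phi>_def algebra_simps)
    then show ?case using elim by (simp add: divide_le_eq mult.commute)
  qed
  then have "g \<bullet> (y - x) \<le> f y - f x"
    using tendsto_upperbound[OF slope] by simp
  then show ?thesis by (simp add: inner_diff_right)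
qed

lemma projected_iterates_in_set:
  fixes S :: "'a::{real_inner,heine_borel} set" and Y z :: "nat \<Rightarrow> 'a"
  assumes "closed S" and "Y 1 \<in> S"
    and "\<And>t. 1 \<le> t \<Longrightarrow> Y (t + 1) = closest_point S (z t)"
    and "1 \<le> t"
  shows "Y t \<in> S"
  using \<open>1 \<le> t\<close>
proof (induction t rule: dec_induct)
  case (step t)
  then show ?case
    using assms(1-3) by (auto intro: closest_point_in_set)
qed (use assms in simp)

lemma projected_step_inner_le:
  fixes S :: "'a::{real_inner,heine_borel} set"
  assumes "closed S" "convex S" "v \<in> S" "0 < e"
  shows "g \<bullet> (y - v) \<le> ((norm (y - v))\<^sup>2 - (norm (closest_point S (y - e *\<^sub>R g) - v))\<^sup>2) / (2 * e)
    + e / 2 * (norm g)\<^sup>2"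
proof -
  have "norm (closest_point S (y - e *\<^sub>R g) - v) \<le> norm (y - e *\<^sub>R g - v)"
    using closest_point_lipschitz[OF assms(2,1), of "y - e *\<^sub>R g" v] closest_point_self[OF assms(3)]
      assms(3) by (auto simp: dist_norm)
  then have "(norm (closest_point S (y - e *\<^sub>R g) - v))\<^sup>2 \<le> (norm (y - e *\<^sub>R g - v))\<^sup>2"
    by (simp add: power_mono)
  also have "\<dots> = (norm (y - v))\<^sup>2 - 2 * e * (g \<bullet> (y - v)) + e\<^sup>2 * (norm g)\<^sup>2"
    using dot_norm_neg[of "y - v" "e *\<^sub>R g"]
    by (simp add: algebra_simps power_mult_distrib inner_commute)
  finally show ?thesis
    using \<open>0 < e\<close> by (simp add: field_simps power2_eq_square)
qed

lemma norm_diff_le_sum_increments: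
  fixes Y :: "nat \<Rightarrow> 'a::real_normed_vector"
  shows "norm (Y t - Y (t + k)) \<le> (\<Sum>j<k. norm (Y (t + j + 1) - Y (t + j)))"
proof -
  have "Y t - Y (t + k) = (\<Sum>j<k. Y (t + j) - Y (t + j + 1))"
    using sum_lessThan_telescope'[of "\<lambda>j. Y (t + j)" k] by simp
  then show ?thesis
    using norm_sum[of "\<lambda>j. Y (t + j) - Y (t + j + 1)" "{..<k}"] by (simp add: norm_minus_commute)
qed

lemma sum_shifted_le_window:
  fixes g :: "nat \<Rightarrow> real"
  assumes "\<And>r. 0 \<le> g r" and "\<And>r. r \<le> a \<Longrightarrow> g r = 0" and "j \<le> b"
  shows "(\<Sum>t=1..T. g (t + j)) \<le> (\<Sum>r=a+1..T+b. g r)"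
proof -
  have "(\<Sum>t=1..T. g (t + j)) = (\<Sum>r=j+1..T+j. g r)"
    using sum.shift_bounds_cl_nat_ivl[of g 1 j T] by (simp add: add.commute)
  also have "\<dots> = (\<Sum>r\<in>{j+1..T+j} \<inter> {a<..}. g r)"
    using assms(2) by (intro sum.mono_neutral_right) (auto simp: not_less[symmetric])
  also have "\<dots> \<le> (\<Sum>r=a+1..T+b. g r)"
    using assms(1,3) by (intro sum_mono2) auto
  finally show ?thesis .
qed

definition delayed_average ::
    "'m set \<Rightarrow> ('m \<Rightarrow> real) \<Rightarrow> ('m \<Rightarrow> nat) \<Rightarrow> ('m \<Rightarrow> nat \<Rightarrow> 'x::real_vector) \<Rightarrow> nat \<Rightarrow> 'x" where
  "delayed_average W a \<tau> G s = (\<Sum>m\<in>W. a m *\<^sub>R (if \<tau> m < s then G m (s - \<tau> m) else 0))"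

text \<open>Source m's feedback G m t about round t is used \<tau> m rounds later; apart from its norm
bound it is arbitrary (in the application it is the gradient of f m t at the learner's iterate).\<close>

locale delayed_projected_gd =
  fixes S :: "'x::{real_inner,heine_borel} set"
    and W :: "'m set" and a :: "'m \<Rightarrow> real" and \<tau> :: "'m \<Rightarrow> nat"
    and G :: "'m \<Rightarrow> nat \<Rightarrow> 'x" and L :: "'m \<Rightarrow> real"
    and \<eta> :: "nat \<Rightarrow> real" and Y :: "nat \<Rightarrow> 'x"
  assumes closed_S: "closed S" and convex_S: "convex S" and bounded_S: "bounded S"
    and finite_W: "finite W" and W_nonempty: "W \<noteq> {}"
    and a_nonneg: "\<And>m. m \<in> W \<Longrightarrow> 0 \<le> a m" and sum_a: "(\<Sum>m\<in>W. a m) = 1"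
    and norm_G_le: "\<And>m t. m \<in> W \<Longrightarrow> 1 \<le> t \<Longrightarrow> norm (G m t) \<le> L m"
    and \<eta>_pos: "\<And>t. 1 \<le> t \<Longrightarrow> 0 < \<eta> t"
    and Y_1: "Y 1 \<in> S"
    and Y_step: "\<And>t. 1 \<le> t \<Longrightarrow>
      Y (t + 1) = closest_point S (Y t - \<eta> t *\<^sub>R delayed_average W a \<tau> G t)"
begin

abbreviation dir :: "nat \<Rightarrow> 'x" where
  "dir \<equiv> delayed_average W a \<tau> G"

definition K :: real where
  "K = Max ((\<lambda>m. a m * L m) ` W)"

definition \<tau>_min :: nat where
  "\<tau>_min = Min (\<tau> ` W)"

definition \<tau>_max :: nat where
  "\<tau>_max = Max (\<tau> ` W)"

lemma \<tau>_min_le: "m \<in> W \<Longrightarrow> \<tau>_min \<le> \<tau> m"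
  by (simp add: \<tau>_min_def finite_W)

lemma le_\<tau>_max: "m \<in> W \<Longrightarrow> \<tau> m \<le> \<tau>_max"
  by (simp add: \<tau>_max_def finite_W)

lemma \<tau>_min_le_\<tau>_max: "\<tau>_min \<le> \<tau>_max"
  using W_nonempty \<tau>_min_le le_\<tau>_max by (meson ex_in_conv order_trans)

lemma L_nonneg: "m \<in> W \<Longrightarrow> 0 \<le> L m"
  using norm_G_le[of m 1] norm_ge_zero order_trans by blast

lemma a_le_1: "m \<in> W \<Longrightarrow> a m \<le> 1"
  using member_le_sum[of m W a] a_nonneg finite_W sum_a by simp

lemma a_mult_L_le_K: "m \<in> W \<Longrightarrow> a m * L m \<le> K"
  by (simp add: K_def finite_W)

lemma K_nonneg: "0 \<le> K"
  using W_nonempty a_mult_L_le_K a_nonneg L_nonneg by (meson ex_in_conv order_trans zero_le_mult_iff)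

lemma Y_in_S: "1 \<le> t \<Longrightarrow> Y t \<in> S"
  using projected_iterates_in_set[OF closed_S Y_1 Y_step] .

lemma norm_Y_diff_le_diameter: "1 \<le> t \<Longrightarrow> V \<in> S \<Longrightarrow> norm (Y t - V) \<le> diameter S"
  using diameter_bounded_bound[OF bounded_S Y_in_S] by (simp add: dist_norm)

lemma abs_inner_G_le:
  assumes "m \<in> W" "1 \<le> t" "1 \<le> s" "V \<in> S"
  shows "\<bar>G m t \<bullet> (Y s - V)\<bar> \<le> L m * diameter S"
  using order_trans[OF Cauchy_Schwarz_ineq2 mult_mono[OF norm_G_le[OF assms(1,2)]
        norm_Y_diff_le_diameter[OF assms(3,4)] L_nonneg[OF assms(1)] norm_ge_zero]] .

lemma dir_eq_0: "s \<le> \<tau>_min \<Longrightarrow> dir s = 0"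
  using \<tau>_min_le by (force simp: delayed_average_def intro!: sum.neutral)

lemma norm_dir_le: "norm (dir s) \<le> (\<Sum>m\<in>W. a m * L m)"
proof -
  have "norm (dir s) \<le> (\<Sum>m\<in>W. norm (a m *\<^sub>R (if \<tau> m < s then G m (s - \<tau> m) else 0)))"
    unfolding delayed_average_def by (rule norm_sum)
  also have "\<dots> \<le> (\<Sum>m\<in>W. a m * L m)"
    using a_nonneg L_nonneg norm_G_le by (intro sum_mono) (auto intro: mult_left_mono)
  finally show ?thesis .
qed

lemma norm_dir_le_card_K: "norm (dir s) \<le> real (card W) * K"
  using norm_dir_le[of s] sum_bounded_above[of W "\<lambda>m. a m * L m" K] a_mult_L_le_K by simp

lemma norm_dir_square_le: "(norm (dir s))\<^sup>2 \<le> K * (\<Sum>m\<in>W. L m)"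
proof -
  have "(norm (dir s))\<^sup>2 \<le> (\<Sum>m\<in>W. a m * L m)\<^sup>2"
    using norm_dir_le[of s] by (simp add: power_mono)
  also have "\<dots> \<le> (\<Sum>m\<in>W. a m * (L m)\<^sup>2)"
    using convex_on_sum[OF finite_W W_nonempty convex_power2 sum_a, of L] a_nonneg by simp
  also have "\<dots> \<le> (\<Sum>m\<in>W. K * L m)"
    using a_mult_L_le_K L_nonneg by (intro sum_mono) (simp add: power2_eq_square mult_right_mono flip: mult.assoc)
  finally show ?thesis by (simp add: sum_distrib_left)
qed

lemma norm_step_le: "1 \<le> t \<Longrightarrow> norm (Y (t + 1) - Y t) \<le> \<eta> t * norm (dir t)"
  using closest_point_lipschitz[OF convex_S closed_S, of "Y t - \<eta> t *\<^sub>R dir t" "Y t"]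
    closest_point_self[OF Y_in_S] Y_in_S Y_step \<eta>_pos
  by (force simp: dist_norm)

lemma step_size_nonneg: "0 \<le> \<eta> r * norm (dir r)"
  \<comment> \<open>\<eta> 0 is unconstrained, but dir 0 = 0.\<close>
  using \<eta>_pos[of r] dir_eq_0[of 0] by (cases r) auto

lemma norm_drift_le:
  assumes "1 \<le> t"
  shows "norm (Y t - Y (t + k)) \<le> (\<Sum>j<k. \<eta> (t + j) * norm (dir (t + j)))"
proof -
  have "norm (Y t - Y (t + k)) \<le> (\<Sum>j<k. norm (Y (t + j + 1) - Y (t + j)))"
    by (rule norm_diff_le_sum_increments)
  also have "\<dots> \<le> (\<Sum>j<k. \<eta> (t + j) * norm (dir (t + j)))"
    using assms by (intro sum_mono norm_step_le) simp
  finally show ?thesis .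
qed

lemma sum_step_size_le:
  "(\<Sum>r=\<tau>_min+1..T+\<tau>_max. \<eta> r * norm (dir r)) \<le> real (card W) * K * (\<Sum>r=\<tau>_min+1..T+\<tau>_max. \<eta> r)"
  unfolding sum_distrib_left
  using \<eta>_pos norm_dir_le_card_K by (intro sum_mono) (simp add: mult.commute mult_left_mono)

lemma sum_inner_dir_le:
  assumes "V \<in> S"
  shows "(\<Sum>s=\<tau>_min+1..T+\<tau>_max. dir s \<bullet> (Y s - V)) \<le>
    (\<Sum>s=\<tau>_min+1..T+\<tau>_max. ((norm (Y s - V))\<^sup>2 - (norm (Y (s + 1) - V))\<^sup>2) / (2 * \<eta> s))
    + K / 2 * (\<Sum>m\<in>W. L m) * (\<Sum>s=\<tau>_min+1..T+\<tau>_max. \<eta> s)"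
proof -
  have "dir s \<bullet> (Y s - V) \<le> ((norm (Y s - V))\<^sup>2 - (norm (Y (s + 1) - V))\<^sup>2) / (2 * \<eta> s)
      + K / 2 * (\<Sum>m\<in>W. L m) * \<eta> s" if "1 \<le> s" for s
  proof -
    have "dir s \<bullet> (Y s - V) \<le> ((norm (Y s - V))\<^sup>2 - (norm (Y (s + 1) - V))\<^sup>2) / (2 * \<eta> s)
        + \<eta> s / 2 * (norm (dir s))\<^sup>2"
      using projected_step_inner_le[OF closed_S convex_S assms \<eta>_pos[OF that]]
      by (simp only: Y_step[OF that])
    moreover have "\<eta> s / 2 * (norm (dir s))\<^sup>2 \<le> \<eta> s / 2 * (K * (\<Sum>m\<in>W. L m))"
      using \<eta>_pos[OF that] norm_dir_square_le by (intro mult_left_mono) auto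
    ultimately show ?thesis by (simp add: mult_ac)
  qed
  then have "(\<Sum>s=\<tau>_min+1..T+\<tau>_max. dir s \<bullet> (Y s - V)) \<le>
    (\<Sum>s=\<tau>_min+1..T+\<tau>_max. ((norm (Y s - V))\<^sup>2 - (norm (Y (s + 1) - V))\<^sup>2) / (2 * \<eta> s)
      + K / 2 * (\<Sum>m\<in>W. L m) * \<eta> s)"
    by (intro sum_mono) simp
  then show ?thesis
    by (simp only: sum.distrib flip: sum_distrib_left)
qed

lemma delayed_term_le:
  assumes m: "m \<in> W" and V: "V \<in> S"
  shows "(\<Sum>t=1..T. a m * (G m t \<bullet> (Y (t + \<tau> m) - V)))
    \<le> (\<Sum>s=\<tau>_min+1..T+\<tau>_max. a m * ((if \<tau> m < s then G m (s - \<tau> m) else 0) \<bullet> (Y s - V)))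
      + (real \<tau>_max - real \<tau>_min) * (a m * L m * diameter S)"
proof -
  define F where "F s = a m * ((if \<tau> m < s then G m (s - \<tau> m) else 0) \<bullet> (Y s - V))" for s
  have window: "{\<tau>_min+1..T+\<tau>_max} = {\<tau>_min+1..\<tau> m} \<union> {\<tau> m+1..T+\<tau> m} \<union> {T+\<tau> m+1..T+\<tau>_max}"
    using \<tau>_min_le[OF m] le_\<tau>_max[OF m] by auto
  have "(\<Sum>s=\<tau>_min+1..T+\<tau>_max. F s)
      = (\<Sum>s=\<tau>_min+1..\<tau> m. F s) + (\<Sum>s=\<tau> m+1..T+\<tau> m. F s) + (\<Sum>s=T+\<tau> m+1..T+\<tau>_max. F s)"
    unfolding window by (subst sum.union_disjoint; auto)+
  moreover have "(\<Sum>s=\<tau>_min+1..\<tau> m. F s) = 0"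
    by (simp add: F_def)
  moreover have "(\<Sum>s=\<tau> m+1..T+\<tau> m. F s) = (\<Sum>t=1..T. a m * (G m t \<bullet> (Y (t + \<tau> m) - V)))"
    using sum.shift_bounds_cl_nat_ivl[of F 1 "\<tau> m" T] by (simp add: F_def add.commute)
  moreover have "(\<Sum>s=T+\<tau> m+1..T+\<tau>_max. F s) \<ge> - ((real \<tau>_max - real \<tau>_min) * (a m * L m * diameter S))"
  proof -
    have "- (a m * L m * diameter S) \<le> F s" if "s \<in> {T+\<tau> m+1..T+\<tau>_max}" for s
    proof -
      have "1 \<le> s - \<tau> m" "1 \<le> s"
        using that by auto
      from abs_inner_G_le[OF m this V]
      have "- (L m * diameter S) \<le> G m (s - \<tau> m) \<bullet> (Y s - V)"
        by (simp add: abs_le_iff)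
      then show ?thesis
        using that mult_left_mono[OF _ a_nonneg[OF m]] by (force simp: F_def)
    qed
    from sum_bounded_below[where A="{T+\<tau> m+1..T+\<tau>_max}", OF this]
    have "real (\<tau>_max - \<tau> m) * (- (a m * L m * diameter S)) \<le> (\<Sum>s=T+\<tau> m+1..T+\<tau>_max. F s)"
      by simp
    moreover have "real (\<tau>_max - \<tau> m) * (a m * L m * diameter S) \<le> (real \<tau>_max - real \<tau>_min) * (a m * L m * diameter S)"
      using \<tau>_min_le[OF m] le_\<tau>_max[OF m] a_nonneg[OF m] L_nonneg[OF m] diameter_ge_0[OF bounded_S]
      by (intro mult_right_mono) auto
    ultimately show ?thesis by simp
  qed
  ultimately show ?thesis
    unfolding F_def by linarith
qed

lemma drift_term_le:
  assumes m: "m \<in> W"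
  shows "(\<Sum>t=1..T. a m * (G m t \<bullet> (Y t - Y (t + \<tau> m))))
    \<le> K * real (\<tau> m) * (\<Sum>r=\<tau>_min+1..T+\<tau>_max. \<eta> r * norm (dir r))"
proof -
  define g where "g r = \<eta> r * norm (dir r)" for r
  have "a m * (G m t \<bullet> (Y t - Y (t + \<tau> m))) \<le> K * (\<Sum>j<\<tau> m. g (t + j))" if "1 \<le> t" for t
  proof -
    have "G m t \<bullet> (Y t - Y (t + \<tau> m)) \<le> L m * norm (Y t - Y (t + \<tau> m))"
      using norm_cauchy_schwarz[of "G m t" "Y t - Y (t + \<tau> m)"]
        mult_right_mono[OF norm_G_le[OF m that] norm_ge_zero[of "Y t - Y (t + \<tau> m)"]]
      by linarith
    then have "a m * (G m t \<bullet> (Y t - Y (t + \<tau> m))) \<le> a m * (L m * norm (Y t - Y (t + \<tau> m)))"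
      using a_nonneg[OF m] by (rule mult_left_mono)
    also have "\<dots> \<le> K * (\<Sum>j<\<tau> m. g (t + j))"
      using a_mult_L_le_K[OF m] norm_drift_le[OF that] K_nonneg
      by (simp add: g_def mult.assoc[symmetric] mult_mono)
    finally show ?thesis .
  qed
  then have "(\<Sum>t=1..T. a m * (G m t \<bullet> (Y t - Y (t + \<tau> m)))) \<le> (\<Sum>t=1..T. K * (\<Sum>j<\<tau> m. g (t + j)))"
    by (intro sum_mono) simp
  also have "\<dots> = K * (\<Sum>j<\<tau> m. \<Sum>t=1..T. g (t + j))"
    by (simp add: sum_distrib_left) (rule sum.swap)
  also have "\<dots> \<le> K * (\<Sum>j<\<tau> m. \<Sum>r=\<tau>_min+1..T+\<tau>_max. g r)"
    using step_size_nonneg dir_eq_0 le_\<tau>_max[OF m] K_nonneg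
    by (intro mult_left_mono sum_mono sum_shifted_le_window) (auto simp: g_def)
  finally show ?thesis
    by (simp add: g_def mult.assoc)
qed

lemma weighted_L_diameter_le:
  "(\<Sum>m\<in>W. a m * L m) * diameter S \<le> (K * (\<Sum>m\<in>W. L m) + real (card W) * (diameter S)\<^sup>2) / 2"
proof -
  have "a m * L m * diameter S \<le> (K * L m + (diameter S)\<^sup>2) / 2" if m: "m \<in> W" for m
  proof -
    have "a m * L m \<le> L m"
      using a_nonneg[OF m] a_le_1[OF m] L_nonneg[OF m] by (simp add: mult_left_le_one_le)
    then have "(a m * L m)\<^sup>2 \<le> K * L m"
      unfolding power2_eq_square
      using a_mult_L_le_K[OF m] a_nonneg[OF m] L_nonneg[OF m] K_nonneg by (intro mult_mono) auto
    then show ?thesis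
      using sum_squares_bound[of "a m * L m" "diameter S"] by (simp add: algebra_simps)
  qed
  then have "(\<Sum>m\<in>W. a m * L m) * diameter S \<le> (\<Sum>m\<in>W. (K * L m + (diameter S)\<^sup>2) / 2)"
    by (simp add: sum_distrib_right sum_mono)
  also have "\<dots> = (K * (\<Sum>m\<in>W. L m) + real (card W) * (diameter S)\<^sup>2) / 2"
    by (simp add: sum.distrib sum_distrib_left flip: sum_divide_distrib)
  finally show ?thesis .
qed

definition regret_bound :: "nat \<Rightarrow> 'x \<Rightarrow> real" where
  "regret_bound T V =
      (K / 2 * (\<Sum>m\<in>W. L m) + real (card W) * K\<^sup>2 * (\<Sum>m\<in>W. real (\<tau> m)))
        * (\<Sum>t=\<tau>_min+1..T+\<tau>_max. \<eta> t)
    + (\<Sum>t=\<tau>_min+1..T+\<tau>_max. ((norm (Y t - V))\<^sup>2 - (norm (Y (t + 1) - V))\<^sup>2) / (2 * \<eta> t))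
    + (real \<tau>_max - real \<tau>_min) / 2 * (K * (\<Sum>m\<in>W. L m) + real (card W) * (diameter S)\<^sup>2)"

theorem linearized_regret_le:
  assumes V: "V \<in> S"
  shows "(\<Sum>t=1..T. \<Sum>m\<in>W. a m * (G m t \<bullet> (Y t - V))) \<le> regret_bound T V"
proof -
  let ?I = "{\<tau>_min+1..T+\<tau>_max}"
  have "(\<Sum>t=1..T. \<Sum>m\<in>W. a m * (G m t \<bullet> (Y t - V)))
      = (\<Sum>m\<in>W. \<Sum>t=1..T. a m * (G m t \<bullet> (Y (t + \<tau> m) - V)))
        + (\<Sum>m\<in>W. \<Sum>t=1..T. a m * (G m t \<bullet> (Y t - Y (t + \<tau> m))))"
    by (subst sum.swap) (simp add: inner_diff_right algebra_simps flip: sum.distrib)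
  moreover have "(\<Sum>m\<in>W. \<Sum>t=1..T. a m * (G m t \<bullet> (Y (t + \<tau> m) - V)))
      \<le> (\<Sum>s\<in>?I. dir s \<bullet> (Y s - V))
        + (real \<tau>_max - real \<tau>_min) * ((\<Sum>m\<in>W. a m * L m) * diameter S)"
  proof -
    have "(\<Sum>s\<in>?I. dir s \<bullet> (Y s - V))
        = (\<Sum>m\<in>W. \<Sum>s\<in>?I. a m * ((if \<tau> m < s then G m (s - \<tau> m) else 0) \<bullet> (Y s - V)))"
      unfolding delayed_average_def by (subst sum.swap) (simp add: inner_sum_left)
    then show ?thesis
      using sum_mono[OF delayed_term_le[OF _ V, of _ T]]
      by (simp add: sum.distrib sum_distrib_left sum_distrib_right mult.assoc)
  qed
  moreover have "(\<Sum>m\<in>W. \<Sum>t=1..T. a m * (G m t \<bullet> (Y t - Y (t + \<tau> m))))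
      \<le> real (card W) * K\<^sup>2 * (\<Sum>m\<in>W. real (\<tau> m)) * (\<Sum>t\<in>?I. \<eta> t)"
  proof -
    have "(\<Sum>m\<in>W. \<Sum>t=1..T. a m * (G m t \<bullet> (Y t - Y (t + \<tau> m))))
        \<le> (\<Sum>m\<in>W. K * real (\<tau> m) * (real (card W) * K * (\<Sum>t\<in>?I. \<eta> t)))"
      using drift_term_le sum_step_size_le K_nonneg
      by (intro sum_mono) (meson mult_left_mono of_nat_0_le_iff order_trans zero_le_mult_iff)
    then show ?thesis
      by (simp add: sum_distrib_left sum_distrib_right power2_eq_square mult_ac)
  qed
  moreover have "(real \<tau>_max - real \<tau>_min) * ((\<Sum>m\<in>W. a m * L m) * diameter S)
      \<le> (real \<tau>_max - real \<tau>_min) / 2 * (K * (\<Sum>m\<in>W. L m) + real (card W) * (diameter S)\<^sup>2)"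
    using mult_left_mono[OF weighted_L_diameter_le, of "real \<tau>_max - real \<tau>_min"] \<tau>_min_le_\<tau>_max
    by simp
  ultimately show ?thesis
    using sum_inner_dir_le[OF V, of T] by (simp add: regret_bound_def algebra_simps)
qed

corollary convex_regret_le:
  fixes f :: "'m \<Rightarrow> nat \<Rightarrow> 'x \<Rightarrow> real"
  assumes V: "V \<in> S"
    and convex: "\<And>m t. m \<in> W \<Longrightarrow> convex_on S (f m t)"
    and gradient: "\<And>m t. m \<in> W \<Longrightarrow> 1 \<le> t \<Longrightarrow> (f m t has_derivative (\<lambda>h. G m t \<bullet> h)) (at (Y t))"
  shows "(\<Sum>t=1..T. \<Sum>m\<in>W. a m * f m t (Y t)) - (\<Sum>t=1..T. \<Sum>m\<in>W. a m * f m t V)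
    \<le> regret_bound T V"
proof -
  have "(\<Sum>t=1..T. \<Sum>m\<in>W. a m * f m t (Y t)) - (\<Sum>t=1..T. \<Sum>m\<in>W. a m * f m t V)
      = (\<Sum>t=1..T. \<Sum>m\<in>W. a m * (f m t (Y t) - f m t V))"
    by (simp add: right_diff_distrib flip: sum_subtractf)
  also have "\<dots> \<le> (\<Sum>t=1..T. \<Sum>m\<in>W. a m * (G m t \<bullet> (Y t - V)))"
    using convex_on_gradient_inequality[OF convex Y_in_S V gradient] a_nonneg
    by (intro sum_mono mult_left_mono) auto
  also have "\<dots> \<le> regret_bound T V"
    using V by (rule linearized_regret_le)
  finally show ?thesis .
qed

end

lemma dam_dir_eq_delayed_average:
  "dam_dir w \<tau> grad X n = delayed_average (Wset w n) (w n) (\<tau> n) (\<lambda>m t. grad m t (X n t))"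
  by (simp add: fun_eq_iff dam_dir_def delayed_average_def)

lemma sum_Wset_eq_sum_UNIV:
  assumes "\<And>m. 0 \<le> w n m"
  shows "(\<Sum>m\<in>Wset w n. w n m) = (\<Sum>m\<in>UNIV. w n (m::'ag::finite))"
  using assms by (intro sum.mono_neutral_left) (auto simp: Wset_def order.order_iff_strict)

theorem theorem3:
  fixes E :: "'ag::finite \<Rightarrow> 'ag \<Rightarrow> bool"
    and w :: "'ag \<Rightarrow> 'ag \<Rightarrow> real"
    and \<X> :: "(real^'c^'r) set"
    and B :: real
    and f :: "'ag \<Rightarrow> nat \<Rightarrow> real^'c^'r \<Rightarrow> real"
    and grad :: "'ag \<Rightarrow> nat \<Rightarrow> real^'c^'r \<Rightarrow> real^'c^'r"
    and L :: "'ag \<Rightarrow> real"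
    and \<tau>t \<tau> :: "'ag \<Rightarrow> 'ag \<Rightarrow> nat"
    and \<eta> :: "'ag \<Rightarrow> nat \<Rightarrow> real"
    and X :: "'ag \<Rightarrow> nat \<Rightarrow> real^'c^'r"
    and U :: "'ag \<Rightarrow> real^'c^'r"
    and T :: nat
  assumes E_sym: "\<And>a b. E a b \<Longrightarrow> E b a"
    and E_irrefl: "\<And>a. \<not> E a a"
    and E_conn: "\<And>a b. \<exists>p. is_path E p \<and> hd p = a \<and> last p = b"
    and X_closed: "closed \<X>" and X_convex: "convex \<X>" and X_bounded: "bounded \<X>"
    and X_ne: "\<X> \<noteq> {}"
    and B_def: "B = diameter \<X>"
    and f_convex: "\<And>m t. convex_on \<X> (f m t)"
    and f_grad: "\<And>m t Y. Y \<in> \<X> \<Longrightarrow> (f m t has_derivative (\<lambda>h. grad m t Y \<bullet> h)) (at Y)"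
    and L_pos: "\<And>m. L m > 0"
    and grad_bound: "\<And>m t Y. Y \<in> \<X> \<Longrightarrow> norm (grad m t Y) \<le> L m"
    and w_range: "\<And>n m. 0 \<le> w n m \<and> w n m \<le> 1"
    and w_stoch: "\<And>n. (\<Sum>m\<in>UNIV. w n m) = 1"
    and tree_paths: "\<And>n m. m \<in> Wset w n \<Longrightarrow>
          \<exists>p. is_path E p \<and> distinct p \<and> hd p = n \<and> last p = m \<and> length p = \<tau>t n m + 1"
    and \<tau>t_self: "\<And>n. \<tau>t n n = 0"
    and \<tau>_def: "\<And>n m. \<tau> n m = 2 * \<tau>t n m"
    and eta_pos: "\<And>n t. 1 \<le> t \<Longrightarrow> \<eta> n t > 0"
    and eta_noninc: "\<And>n t s. 1 \<le> t \<Longrightarrow> t \<le> s \<Longrightarrow> \<eta> n s \<le> \<eta> n t"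
    and X_init: "\<And>n. X n 1 \<in> \<X>"
    and X_step: "\<And>n t. 1 \<le> t \<Longrightarrow>
          X n (t + 1) = closest_point \<X> (X n t - \<eta> n t *\<^sub>R dam_dir w \<tau> grad X n t)"
    and U_mem: "\<And>n. U n \<in> \<X>"
    and U_min: "\<And>n V. V \<in> \<X> \<Longrightarrow>
          (\<Sum>t=1..T. \<Sum>m\<in>Wset w n. w n m * f m t (U n)) \<le> (\<Sum>t=1..T. \<Sum>m\<in>Wset w n. w n m * f m t V)"
    and T_pos: "1 \<le> T"
  shows "regret w f X U T \<le>
    (\<Sum>n\<in>UNIV.
        Qc w L \<tau> n * (\<Sum>t = tmin w \<tau> n + 1 .. T + tmax w \<tau> n. \<eta> n t)
      + Pc w L \<tau> n * \<eta> n (tmin w \<tau> n + 1)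
      + Hc w \<tau> \<eta> X U T n
      + Cc w L \<tau> B n)"
proof -
  have "(\<Sum>t=1..T. \<Sum>m\<in>Wset w n. w n m * f m t (X n t))
      - (\<Sum>t=1..T. \<Sum>m\<in>Wset w n. w n m * f m t (U n))
    \<le> Qc w L \<tau> n * (\<Sum>t = tmin w \<tau> n + 1 .. T + tmax w \<tau> n. \<eta> n t)
      + Pc w L \<tau> n * \<eta> n (tmin w \<tau> n + 1) + Hc w \<tau> \<eta> X U T n + Cc w L \<tau> B n" for n
  proof -
    have X_in: "1 \<le> t \<Longrightarrow> X n t \<in> \<X>" for t
      using projected_iterates_in_set[OF X_closed X_init X_step] .
    have sum_w: "(\<Sum>m\<in>Wset w n. w n m) = 1"
      using w_stoch[of n] w_range sum_Wset_eq_sum_UNIV by metis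
    interpret agent: delayed_projected_gd \<X> "Wset w n" "w n" "\<tau> n" "\<lambda>m t. grad m t (X n t)" L "\<eta> n" "X n"
      using X_closed X_convex X_bounded sum_w w_range grad_bound[OF X_in] eta_pos X_init X_step
      by unfold_locales (auto simp: dam_dir_eq_delayed_average)
    have "0 \<le> Pc w L \<tau> n * \<eta> n (tmin w \<tau> n + 1)"
      using eta_pos[of "tmin w \<tau> n + 1" n] by (simp add: Pc_def)
    then show ?thesis
      using agent.convex_regret_le[OF U_mem[of n] f_convex f_grad[OF X_in], of T]
      unfolding agent.regret_bound_def Qc_def Hc_def Cc_def B_def Kc_def agent.K_def
        tmin_def agent.\<tau>_min_def tmax_def agent.\<tau>_max_def
      by linarith
  qed
  then show ?thesis
    unfolding regret_def by (rule sum_mono)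
qed

end
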